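(* Let $n\ge2$ and let $P_n$ be the path with vertex set $\{1,\dots,n\}$ and edges $\{k,k+1\}$. If $S$ is the eigenvalue support of an edge state $e_k-e_{k+1}$ ($1\le k\le n-1$) with respect to the Laplacian of $P_n$, then $|S|\ge n/2$.
   Context: Let $L$ be the Laplacian of a graph with spectral decomposition $L=\sum_r\theta_rE_r$ ($\theta_r$ distinct eigenvalues, $E_r$ orthogonal projections onto eigenspaces). The eigenvalue support of a vector $x$ is the set of $\theta_r$ with $E_rx\neq0$. *)

theory Defs
  imports Complex_Main
begin

text \<open>Vectors in R^V for a finite vertex set V are modelled as functions
  nat => real that vanish outside V.\<close>

definition vecs :: "nat set \<Rightarrow> (nat \<Rightarrow> real) set" where
  "vecs V = {v. \<forall>i. i \<notin> V \<longrightarrow> v i = 0}"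

definition inner_V :: "nat set \<Rightarrow> (nat \<Rightarrow> real) \<Rightarrow> (nat \<Rightarrow> real) \<Rightarrow> real" where
  "inner_V V x y = (\<Sum>i\<in>V. x i * y i)"

definition laplacian :: "nat set \<Rightarrow> (nat \<Rightarrow> nat \<Rightarrow> bool) \<Rightarrow> (nat \<Rightarrow> real) \<Rightarrow> (nat \<Rightarrow> real)" where
  "laplacian V adj v = (\<lambda>i. if i \<in> V then (\<Sum>j\<in>V. if adj i j then v i - v j else 0) else 0)"

definition path_vertices :: "nat \<Rightarrow> nat set" where
  "path_vertices n = {1..n}"

definition path_adj :: "nat \<Rightarrow> nat \<Rightarrow> bool" where
  "path_adj i j = (j = i + 1 \<or> i = j + 1)"

definition path_laplacian :: "nat \<Rightarrow> (nat \<Rightarrow> real) \<Rightarrow> (nat \<Rightarrow> real)" where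
  "path_laplacian n = laplacian (path_vertices n) path_adj"

text \<open>Eigenspace of a linear map M on R^V for theta (= {0} if theta is not an eigenvalue).\<close>
definition eigenspace_V :: "nat set \<Rightarrow> ((nat \<Rightarrow> real) \<Rightarrow> (nat \<Rightarrow> real)) \<Rightarrow> real \<Rightarrow> (nat \<Rightarrow> real) set" where
  "eigenspace_V V M \<theta> = {v \<in> vecs V. M v = (\<lambda>i. \<theta> * v i)}"

definition eig_proj :: "nat set \<Rightarrow> ((nat \<Rightarrow> real) \<Rightarrow> (nat \<Rightarrow> real)) \<Rightarrow> real \<Rightarrow> (nat \<Rightarrow> real) \<Rightarrow> (nat \<Rightarrow> real)" where
  "eig_proj V M \<theta> x = (THE p. p \<in> eigenspace_V V M \<theta> \<and>
      (\<forall>w \<in> eigenspace_V V M \<theta>. inner_V V (\<lambda>i. x i - p i) w = 0))"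

definition eig_support :: "nat set \<Rightarrow> ((nat \<Rightarrow> real) \<Rightarrow> (nat \<Rightarrow> real)) \<Rightarrow> (nat \<Rightarrow> real) \<Rightarrow> real set" where
  "eig_support V M x = {\<theta>. eig_proj V M \<theta> x \<noteq> (\<lambda>_. 0)}"

definition basis_vec :: "nat \<Rightarrow> (nat \<Rightarrow> real)" where
  "basis_vec k = (\<lambda>i. if i = k then 1 else 0)"

end

theory Submission
  imports Defs "HOL-Computational_Algebra.Polynomial"
begin

(* The rows of L w = theta w form a three-term recurrence, so an eigenvector w of the path
   Laplacian is determined by w(1) and every eigenspace is at most a line; E_theta is then the
   projection onto one eigenvector. For theta_j = 2 - 2 cos(j pi/n) this eigenvector is
   u_j(i) = cos((2i - 1) j pi/(2n)), and <e_k - e_(k+1), u_j> = u_j(k) - u_j(k+1)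
   = 2 sin(j k pi/n) sin(j pi/(2n)), which is nonzero for 0 < j < n unless n divides jk.
   Since n does not divide k, n | jk forces n not to divide (j - 1)k, so among 1, ..., n - 1 the
   j with n not dividing jk outnumber the others; they are at least n/2, and the theta_j are
   distinct. The support is finite (so its cardinality is meaningful) because its elements are
   roots of the degree-n polynomial expressing the last row of L w = theta w. *)

lemma inner_V_self_pos:
  assumes "finite V" and "i \<in> V" and "u i \<noteq> 0"
  shows "inner_V V u u > 0"
proof -
  have "0 < u i * u i" using assms(3) by (metis not_real_square_gt_zero)
  also have "\<dots> \<le> inner_V V u u"
    unfolding inner_V_def using assms(1,2) by (intro member_le_sum) auto
  finally show ?thesis .
qed

lemma inner_V_basis_vec_diff:
  assumes "finite V" and "k \<in> V" and "l \<in> V"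
  shows "inner_V V (\<lambda>i. basis_vec k i - basis_vec l i) u = u k - u l"
proof -
  have "inner_V V (\<lambda>i. basis_vec k i - basis_vec l i) u =
      (\<Sum>i\<in>V. if i = k then u i else 0) - (\<Sum>i\<in>V. if i = l then u i else 0)"
    unfolding inner_V_def basis_vec_def sum_subtractf[symmetric] by (rule sum.cong) auto
  then show ?thesis using assms by simp
qed

lemma inner_V_diff_scaled:
  "inner_V V (\<lambda>i. x i - a * u i) (\<lambda>i. c * u i) = c * (inner_V V x u - a * inner_V V u u)"
  by (simp add: inner_V_def sum_distrib_left sum_subtractf algebra_simps)

lemma eig_proj_line:
  assumes line: "eigenspace_V V M \<theta> = range (\<lambda>c i. c * u i)" and uu: "inner_V V u u \<noteq> 0"
  shows "eig_proj V M \<theta> x = (\<lambda>i. inner_V V x u / inner_V V u u * u i)"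
  unfolding eig_proj_def
proof (rule the_equality)
  define a where "a = inner_V V x u / inner_V V u u"
  have orth: "inner_V V (\<lambda>i. x i - a * u i) (\<lambda>i. c * u i) = 0" for c
    unfolding inner_V_diff_scaled a_def using uu by simp
  show "(\<lambda>i. a * u i) \<in> eigenspace_V V M \<theta> \<and>
      (\<forall>w \<in> eigenspace_V V M \<theta>. inner_V V (\<lambda>i. x i - a * u i) w = 0)"
    unfolding line using orth by auto
  fix p assume p: "p \<in> eigenspace_V V M \<theta> \<and>
      (\<forall>w \<in> eigenspace_V V M \<theta>. inner_V V (\<lambda>i. x i - p i) w = 0)"
  then obtain c where c: "p = (\<lambda>i. c * u i)" unfolding line by auto
  have "u \<in> eigenspace_V V M \<theta>" unfolding line by (auto intro: range_eqI[of _ _ 1])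
  with p have "inner_V V (\<lambda>i. x i - c * u i) (\<lambda>i. 1 * u i) = 0" unfolding c by simp
  then have "c = a" using uu unfolding inner_V_diff_scaled a_def by (simp add: field_simps)
  then show "p = (\<lambda>i. a * u i)" using c by simp
qed

lemma eig_proj_trivial:
  assumes "eigenspace_V V M \<theta> = {\<lambda>_. 0}"
  shows "eig_proj V M \<theta> x = (\<lambda>_. 0)"
  unfolding eig_proj_def assms by (rule the_equality) (simp_all add: inner_V_def)

lemma degree_diff_eq_left:
  fixes p q :: "'a::ab_group_add poly"
  shows "degree q < degree p \<Longrightarrow> degree (p - q) = degree p"
  using degree_add_eq_left[of "- q" p] by simp

lemma path_laplacian_apply:
  assumes "i \<in> {1..n}"
  shows "path_laplacian n w i =
    (if 1 < i then w i - w (i - 1) else 0) + (if i < n then w i - w (i + 1) else 0)"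
proof -
  have "path_laplacian n w i = (\<Sum>j\<in>{1..n}.
      (if j = i + 1 then w i - w j else 0) + (if 1 < i \<and> j = i - 1 then w i - w j else 0))"
    unfolding path_laplacian_def laplacian_def path_vertices_def using assms
    by (auto intro!: sum.cong simp: path_adj_def)
  also have "\<dots> = (if 1 < i then w i - w (i - 1) else 0) + (if i < n then w i - w (i + 1) else 0)"
    using assms by (cases "1 < i") (auto simp: sum.distrib)
  finally show ?thesis .
qed

lemma path_laplacian_outside: "i \<notin> {1..n} \<Longrightarrow> path_laplacian n w i = 0"
  unfolding path_laplacian_def laplacian_def path_vertices_def by auto

lemma path_laplacian_scale:
  "path_laplacian n (\<lambda>i. c * w i) = (\<lambda>i. c * path_laplacian n w i)"
  unfolding path_laplacian_def laplacian_def
  by (rule ext) (auto simp: sum_distrib_left algebra_simps intro!: sum.cong)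

fun path_eigen_poly :: "nat \<Rightarrow> real poly" where
  "path_eigen_poly 0 = 1"
| "path_eigen_poly (Suc 0) = [:1, -1:]"
| "path_eigen_poly (Suc (Suc m)) = [:2, -1:] * path_eigen_poly (Suc m) - path_eigen_poly m"

lemma degree_path_eigen_poly: "degree (path_eigen_poly m) = m"
proof (induction m rule: path_eigen_poly.induct)
  case (3 m)
  have "degree ([:2, -1:] * path_eigen_poly (Suc m)) = Suc (Suc m)"
    using "3.IH"(1) by (subst degree_mult_eq) auto
  with "3.IH"(2) show ?case by (simp add: degree_diff_eq_left)
qed simp_all

lemma path_eigenvector_entry:
  assumes "w \<in> eigenspace_V (path_vertices n) (path_laplacian n) \<theta>" and "m < n"
  shows "w (Suc m) = w 1 * poly (path_eigen_poly m) \<theta>"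
  using assms(2)
proof (induction m rule: path_eigen_poly.induct)
  case 1
  then show ?case by simp
next
  case 2
  have "\<theta> * w 1 = path_laplacian n w 1"
    using assms(1) unfolding eigenspace_V_def by simp
  also have "\<dots> = w 1 - w (Suc 1)" using 2 by (subst path_laplacian_apply) auto
  finally show ?case by (simp add: algebra_simps)
next
  case (3 m)
  have "\<theta> * w (Suc (Suc m)) = path_laplacian n w (Suc (Suc m))"
    using assms(1) unfolding eigenspace_V_def by simp
  also have "\<dots> = (w (Suc (Suc m)) - w (Suc m)) + (w (Suc (Suc m)) - w (Suc (Suc (Suc m))))"
    using "3.prems" by (subst path_laplacian_apply) auto
  finally have "w (Suc (Suc (Suc m))) = (2 - \<theta>) * w (Suc (Suc m)) - w (Suc m)"
    by (simp add: algebra_simps)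
  with 3 show ?case by (simp add: algebra_simps)
qed

definition path_eigen_vec :: "nat \<Rightarrow> real \<Rightarrow> nat \<Rightarrow> real" where
  "path_eigen_vec n \<theta> i = (if i \<in> {1..n} then poly (path_eigen_poly (i - 1)) \<theta> else 0)"

lemma path_eigenvector_eq:
  assumes "w \<in> eigenspace_V (path_vertices n) (path_laplacian n) \<theta>"
  shows "w i = w 1 * path_eigen_vec n \<theta> i"
proof (cases "i \<in> {1..n}")
  case True
  then obtain m where i: "i = Suc m" and m: "m < n" by (cases i) auto
  show ?thesis using path_eigenvector_entry[OF assms m] m by (simp add: i path_eigen_vec_def)
next
  case False
  then show ?thesis
    using assms unfolding eigenspace_V_def vecs_def path_vertices_def path_eigen_vec_def by auto
qed

lemma path_eigenspace_line:
  assumes u: "u \<in> eigenspace_V (path_vertices n) (path_laplacian n) \<theta>" and u1: "u 1 \<noteq> 0"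
  shows "eigenspace_V (path_vertices n) (path_laplacian n) \<theta> = range (\<lambda>c i. c * u i)"
proof (intro antisym subsetI)
  fix w assume w: "w \<in> eigenspace_V (path_vertices n) (path_laplacian n) \<theta>"
  have "w i = w 1 / u 1 * u i" for i
    using path_eigenvector_eq[OF w, of i] path_eigenvector_eq[OF u, of i] u1 by simp
  then show "w \<in> range (\<lambda>c i. c * u i)" by blast
next
  fix w assume "w \<in> range (\<lambda>c i. c * u i)"
  then obtain c where "w = (\<lambda>i. c * u i)" by blast
  then show "w \<in> eigenspace_V (path_vertices n) (path_laplacian n) \<theta>"
    using u unfolding eigenspace_V_def vecs_def by (simp add: path_laplacian_scale mult.left_commute)
qed

(* theta w(n) = w(n) - w(n - 1), the last row of L w = theta w, divided by w(1). *)
definition path_boundary_poly :: "nat \<Rightarrow> real poly" where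
  "path_boundary_poly n =
    [:0, 1:] * path_eigen_poly (n - 1) - (path_eigen_poly (n - 1) - path_eigen_poly (n - 2))"

lemma degree_path_boundary_poly:
  assumes "n \<ge> 1"
  shows "degree (path_boundary_poly n) = n"
proof -
  have "degree ([:0, 1:] * path_eigen_poly (n - 1)) = n"
    using assms degree_path_eigen_poly[of "n - 1"] by (subst degree_mult_eq) auto
  moreover have "degree (path_eigen_poly (n - 1) - path_eigen_poly (n - 2)) < n"
    using assms by (intro degree_diff_less) (simp_all add: degree_path_eigen_poly)
  ultimately show ?thesis unfolding path_boundary_poly_def by (simp add: degree_diff_eq_left)
qed

lemma path_eigenspace_trivial:
  assumes n: "n \<ge> 2" and \<theta>: "poly (path_boundary_poly n) \<theta> \<noteq> 0"
  shows "eigenspace_V (path_vertices n) (path_laplacian n) \<theta> = {\<lambda>_. 0}"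
proof (intro antisym subsetI)
  fix w assume w: "w \<in> eigenspace_V (path_vertices n) (path_laplacian n) \<theta>"
  have "\<theta> * w n = path_laplacian n w n"
    using w unfolding eigenspace_V_def by simp
  also have "\<dots> = w n - w (n - 1)" using n by (subst path_laplacian_apply) auto
  finally have row: "\<theta> * w n = w n - w (n - 1)" .
  have "w n = w 1 * poly (path_eigen_poly (n - 1)) \<theta>"
    using path_eigenvector_entry[OF w, of "n - 1"] n by simp
  moreover have "w (n - 1) = w 1 * poly (path_eigen_poly (n - 2)) \<theta>"
    using path_eigenvector_entry[OF w, of "n - 2"] n by (simp add: Suc_diff_Suc numeral_2_eq_2)
  ultimately have "w 1 * poly (path_boundary_poly n) \<theta> = \<theta> * w n - (w n - w (n - 1))"
    by (simp add: path_boundary_poly_def algebra_simps)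
  then have "w 1 * poly (path_boundary_poly n) \<theta> = 0" using row by simp
  then have "w 1 = 0" using \<theta> by simp
  then have "w i = 0" for i using path_eigenvector_eq[OF w, of i] by simp
  then show "w \<in> {\<lambda>_. 0}" by auto
next
  fix w :: "nat \<Rightarrow> real" assume "w \<in> {\<lambda>_. 0}"
  moreover have "path_laplacian n (\<lambda>_. 0) = (\<lambda>_. 0)"
    using path_laplacian_scale[of n 0 "\<lambda>_. 0"] by simp
  ultimately show "w \<in> eigenspace_V (path_vertices n) (path_laplacian n) \<theta>"
    unfolding eigenspace_V_def vecs_def by simp
qed

lemma finite_eig_support_path:
  assumes "n \<ge> 2"
  shows "finite (eig_support (path_vertices n) (path_laplacian n) x)"
proof (rule finite_subset)
  show "eig_support (path_vertices n) (path_laplacian n) x \<subseteq> {\<theta>. poly (path_boundary_poly n) \<theta> = 0}"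
    using eig_proj_trivial path_eigenspace_trivial[OF assms] unfolding eig_support_def by blast
  show "finite {\<theta>. poly (path_boundary_poly n) \<theta> = 0}"
    using assms degree_path_boundary_poly[of n] by (intro poly_roots_finite) auto
qed

lemma cos_odd_half_diff:
  "cos ((2 * real i - 1) * t / 2) - cos ((2 * real (i + 1) - 1) * t / 2) =
    2 * sin (real i * t) * sin (t / 2)"
  unfolding cos_diff_cos by (simp add: field_simps)

lemma cos_odd_half_three_term:
  "cos ((2 * real i - 1) * t / 2) + cos ((2 * real (i + 2) - 1) * t / 2) =
    2 * cos t * cos ((2 * real (i + 1) - 1) * t / 2)"
proof -
  define a where "a = (2 * real (i + 1) - 1) * t / 2"
  have "(2 * real i - 1) * t / 2 = a - t" and "(2 * real (i + 2) - 1) * t / 2 = a + t"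
    unfolding a_def by (simp_all add: algebra_simps)
  then show ?thesis unfolding a_def[symmetric] by (simp only: cos_add cos_diff) simp
qed

definition path_cos_vec :: "nat \<Rightarrow> real \<Rightarrow> nat \<Rightarrow> real" where
  "path_cos_vec n t i = (if i \<in> {1..n} then cos ((2 * real i - 1) * t / 2) else 0)"

lemma path_cos_vec_eigenvector:
  assumes "sin (real n * t) = 0"
  shows "path_cos_vec n t \<in> eigenspace_V (path_vertices n) (path_laplacian n) (2 - 2 * cos t)"
proof -
  define u where "u = path_cos_vec n t"
  define c where "c i = cos ((2 * real i - 1) * t / 2)" for i
  have u_c: "u i = c i" if "i \<in> {1..n}" for i
    using that unfolding u_def path_cos_vec_def c_def by simp
  have "path_laplacian n u i = (2 - 2 * cos t) * u i" if i: "i \<in> {1..n}" for i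
  proof -
    have left: "(if 1 < i then u i - u (i - 1) else 0) = c i - c (i - 1)"
    proof (cases "1 < i")
      case True
      then have "i - 1 \<in> {1..n}" using i by auto
      then show ?thesis using True i by (simp add: u_c)
    next
      case False
      then have "i = 1" using i by simp
      then show ?thesis by (simp add: c_def)
    qed
    have "c n - c (n + 1) = 0"
      using cos_odd_half_diff[of n t] assms unfolding c_def by simp
    then have right: "(if i < n then u i - u (i + 1) else 0) = c i - c (i + 1)"
      using i by (auto simp: u_c)
    have "c (i - 1) + c (i + 1) = 2 * cos t * c i"
      using cos_odd_half_three_term[of "i - 1" t] i unfolding c_def by (simp add: algebra_simps)
    then show ?thesis
      using path_laplacian_apply[OF i, of u] left right u_c[OF i] by (simp add: algebra_simps)
  qed
  moreover have "path_laplacian n u i = (2 - 2 * cos t) * u i" if "i \<notin> {1..n}" for i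
  proof -
    have "u i = 0" using that unfolding u_def path_cos_vec_def by auto
    then show ?thesis using path_laplacian_outside[OF that] by simp
  qed
  ultimately have "path_laplacian n u = (\<lambda>i. (2 - 2 * cos t) * u i)" by blast
  moreover have "u \<in> vecs (path_vertices n)"
    unfolding u_def path_cos_vec_def vecs_def path_vertices_def by simp
  ultimately show ?thesis unfolding eigenspace_V_def u_def by simp
qed

lemma sin_pi_fraction_nonzero:
  assumes "n \<noteq> 0" and "\<not> n dvd m"
  shows "sin (real m * pi / real n) \<noteq> 0"
proof
  assume "sin (real m * pi / real n) = 0"
  then obtain q :: int where "real m * pi / real n = of_int q * pi"
    by (auto simp: sin_zero_iff_int2)
  then have "of_int (int m) = (of_int (q * int n) :: real)"
    using assms(1) by (simp add: field_simps)
  then have "int m = q * int n" by (simp only: of_int_eq_iff)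
  then have "n dvd m" by (metis dvd_triv_right int_dvd_int_iff)
  with assms(2) show False ..
qed

lemma path_edge_state_eig_support:
  assumes k: "1 \<le> k" "k < n" and j: "0 < j" "j < n" and nondvd: "\<not> n dvd j * k"
  shows "2 - 2 * cos (real j * pi / real n) \<in>
    eig_support (path_vertices n) (path_laplacian n) (\<lambda>i. basis_vec k i - basis_vec (k + 1) i)"
proof -
  define t where "t = real j * pi / real n"
  define u where "u = path_cos_vec n t"
  define x where "x = (\<lambda>i. basis_vec k i - basis_vec (k + 1) i)"
  have t: "0 < t" "t < pi" unfolding t_def using j by (simp_all add: field_simps)
  have "sin (real n * t) = 0" unfolding t_def using j by simp
  then have u_eig: "u \<in> eigenspace_V (path_vertices n) (path_laplacian n) (2 - 2 * cos t)"
    unfolding u_def by (rule path_cos_vec_eigenvector)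
  have "u 1 = cos (t / 2)" unfolding u_def path_cos_vec_def using k by simp
  then have u1: "u 1 > 0" using t by (simp add: cos_gt_zero_pi)
  have uu: "inner_V (path_vertices n) u u > 0"
    using u1 k by (intro inner_V_self_pos[where i = 1]) (auto simp: path_vertices_def)
  have "inner_V (path_vertices n) x u = u k - u (k + 1)"
    unfolding x_def using k by (intro inner_V_basis_vec_diff) (auto simp: path_vertices_def)
  also have "\<dots> = 2 * sin (real k * t) * sin (t / 2)"
    using k cos_odd_half_diff[of k t] by (simp add: u_def path_cos_vec_def)
  finally have xu: "inner_V (path_vertices n) x u = 2 * sin (real k * t) * sin (t / 2)" .
  have "sin (real k * t) \<noteq> 0"
  proof -
    have "real k * t = real (j * k) * pi / real n" unfolding t_def by simp
    then show ?thesis using sin_pi_fraction_nonzero[of n "j * k"] j nondvd by simp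
  qed
  moreover have "sin (t / 2) > 0" using t by (simp add: sin_gt_zero)
  ultimately have "inner_V (path_vertices n) x u \<noteq> 0" unfolding xu by simp
  moreover have "eig_proj (path_vertices n) (path_laplacian n) (2 - 2 * cos t) x =
      (\<lambda>i. inner_V (path_vertices n) x u / inner_V (path_vertices n) u u * u i)"
    using path_eigenspace_line[OF u_eig] u1 uu by (intro eig_proj_line) auto
  ultimately have "eig_proj (path_vertices n) (path_laplacian n) (2 - 2 * cos t) x 1 \<noteq> 0"
    using u1 uu by simp
  then show ?thesis unfolding eig_support_def x_def t_def by auto
qed

(* j |-> j - 1 maps the j with n | jk into the others, missing n - 1. *)
lemma card_nondvd_multiples:
  fixes n k :: nat
  assumes "\<not> n dvd k"
  shows "n \<le> 2 * card {j \<in> {1..n - 1}. \<not> n dvd j * k}"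
proof (cases "n = 0")
  case False
  define G where "G = {j \<in> {1..n - 1}. \<not> n dvd j * k}"
  define B where "B = {j \<in> {1..n - 1}. n dvd j * k}"
  have pred_nondvd: "\<not> n dvd (j - 1) * k" if "1 \<le> j" and "n dvd j * k" for j
  proof
    assume "n dvd (j - 1) * k"
    moreover have "j * k = (j - 1) * k + k" using that(1) by (cases j) auto
    ultimately have "n dvd k" using that(2) by (simp add: dvd_add_right_iff)
    with assms show False ..
  qed
  have "n \<noteq> 1" using assms by auto
  then have top: "n - 1 \<in> G"
    using pred_nondvd[of n] False unfolding G_def by auto
  have "(\<lambda>j. j - 1) ` B \<subseteq> G - {n - 1}"
  proof
    fix i assume "i \<in> (\<lambda>j. j - 1) ` B"
    then obtain j where i: "i = j - 1" and j: "1 \<le> j" "j \<le> n - 1" "n dvd j * k"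
      unfolding B_def by auto
    have "j \<noteq> 1" using j(3) assms by auto
    then show "i \<in> G - {n - 1}" using pred_nondvd[OF j(1,3)] i j unfolding G_def by auto
  qed
  moreover have "inj_on (\<lambda>j. j - 1) B" unfolding B_def by (rule inj_onI) auto
  ultimately have "card B \<le> card (G - {n - 1})"
    by (intro card_inj_on_le) (auto simp: G_def)
  also have "\<dots> = card G - 1" using top by (simp add: G_def)
  finally have "card B + 1 \<le> card G" using top card_gt_0_iff[of G] by (force simp: G_def)
  moreover have "card G + card B = n - 1"
  proof -
    have "G \<union> B = {1..n - 1}" and "G \<inter> B = {}" unfolding G_def B_def by auto
    then show ?thesis using card_Un_disjoint[of G B] by (simp add: G_def B_def)
  qed
  ultimately show ?thesis unfolding G_def by linarith
qed simp

lemma inj_on_path_eigenvalues: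
  assumes "n \<noteq> 0"
  shows "inj_on (\<lambda>j. 2 - 2 * cos (real j * pi / real n)) {..n}"
proof (rule inj_onI)
  fix a b assume a: "a \<in> {..n}" and b: "b \<in> {..n}"
  assume "2 - 2 * cos (real a * pi / real n) = 2 - 2 * cos (real b * pi / real n)"
  then have cos_eq: "cos (real a * pi / real n) = cos (real b * pi / real n)" by simp
  have le_pi: "real c * pi / real n \<le> pi" if "c \<le> n" for c
  proof -
    have "real c * pi \<le> real n * pi" using that by (simp add: mult_right_mono)
    then show ?thesis using assms by (simp add: pos_divide_le_eq)
  qed
  have "real a * pi / real n = real b * pi / real n"
    by (rule cos_inj_pi) (use a b le_pi cos_eq in auto)
  then show "a = b" using assms by (simp add: divide_cancel_right)
qed

theorem mainTheorem17:
  fixes n k :: nat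
  assumes "n \<ge> 2" and "1 \<le> k" and "k \<le> n - 1"
  shows "real (card (eig_support (path_vertices n) (path_laplacian n)
            (\<lambda>i. basis_vec k i - basis_vec (k + 1) i))) \<ge> real n / 2"
proof -
  let ?S = "eig_support (path_vertices n) (path_laplacian n) (\<lambda>i. basis_vec k i - basis_vec (k + 1) i)"
  let ?G = "{j \<in> {1..n - 1}. \<not> n dvd j * k}"
  let ?\<theta> = "\<lambda>j. 2 - 2 * cos (real j * pi / real n)"
  have "\<not> n dvd k" using assms by (auto dest: dvd_imp_le)
  then have "n \<le> 2 * card ?G" by (rule card_nondvd_multiples)
  also have "card ?G = card (?\<theta> ` ?G)"
    using assms by (intro card_image[symmetric] inj_on_subset[OF inj_on_path_eigenvalues]) auto
  also have "card (?\<theta> ` ?G) \<le> card ?S"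
    using assms path_edge_state_eig_support[of k n]
    by (intro card_mono finite_eig_support_path) auto
  finally show ?thesis by simp
qed

end
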